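(* Let $(X,\Sigma,\mu)$ be a measure space, $n\ge1$, $\mathbb{F}\in\{\mathbb{R},\mathbb{C}\}$, $h\in L^2(X,\mu;\mathbb{F})$, $d\in\mathbb{F}^n$, and define $T:L^2(X,\mu;\mathbb{F}^n)\to\mathbb{F}^n$ by $T(F)=\int_X h(x)f_x\,d\mu(x)$ for $F=(f_x)_{x\in X}$. Suppose $T^{-1}(\{d\})$ contains a continuous frame. Then $\mathcal{F}^{\mathbb{F}}_{(X,\mu),n}\cap T^{-1}(\{d\})$ is dense in $T^{-1}(\{d\})$ (for the norm of $L^2(X,\mu;\mathbb{F}^n)$).
   Context: A family $\Phi=(\varphi_x)_{x\in X}$ in $\mathbb{F}^n$ (with measurable coordinates) is a continuous frame indexed by $(X,\mu)$ if there are $0<A\le B$ with $A\|v\|^2\le\int_X|\langle v,\varphi_x\rangle|^2d\mu(x)\le B\|v\|^2$ for all $v\in\mathbb{F}^n$. $\mathcal{F}^{\mathbb{F}}_{(X,\mu),n}$ denotes the set of such frames, viewed as a subset of $L^2(X,\mu;\mathbb{F}^n)$ (equivalently, the elements of $L^2(X,\mu;\mathbb{F}^n)$ whose coordinate functions are linearly independent in $L^2(X,\mu;\mathbb{F})$). *)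

theory Defs
  imports "HOL-Analysis.Analysis"
begin

text \<open>F^n is modelled as 'f^'n with 'n a finite index type (n = CARD('n) \<ge> 1).
  The field F is either real (conjugation = identity) or complex (conjugation = cnj);
  the parameter c is the conjugation used in the inner product of F^n.\<close>

definition inner_F :: "('f::comm_ring_1 \<Rightarrow> 'f) \<Rightarrow> 'f^'n \<Rightarrow> 'f^'n \<Rightarrow> 'f" where
  "inner_F c v w = (\<Sum>i\<in>UNIV. v $ i * c (w $ i))"

text \<open>Square-integrable functions (representatives of elements of L^2(X,mu;V)).\<close>
definition L2_space :: "'a measure \<Rightarrow> ('a \<Rightarrow> 'b::real_normed_vector) set" where
  "L2_space M = {F. F \<in> borel_measurable M \<and> (\<integral>\<^sup>+ x. ennreal ((norm (F x))\<^sup>2) \<partial>M) < \<infinity>}"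

definition L2_dist2 :: "'a measure \<Rightarrow> ('a \<Rightarrow> 'b::real_normed_vector) \<Rightarrow> ('a \<Rightarrow> 'b) \<Rightarrow> ennreal" where
  "L2_dist2 M F G = (\<integral>\<^sup>+ x. ennreal ((norm (F x - G x))\<^sup>2) \<partial>M)"

definition cont_frame ::
  "('f::{real_normed_field,euclidean_space} \<Rightarrow> 'f) \<Rightarrow> 'a measure \<Rightarrow> ('a \<Rightarrow> 'f^'n) \<Rightarrow> bool" where
  "cont_frame c M \<Phi> \<longleftrightarrow> \<Phi> \<in> L2_space M \<and>
     (\<exists>A B. 0 < A \<and> A \<le> B \<and>
       (\<forall>v::'f^'n.
          ennreal (A * (norm v)\<^sup>2) \<le> (\<integral>\<^sup>+ x. ennreal ((norm (inner_F c v (\<Phi> x)))\<^sup>2) \<partial>M) \<and>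
          (\<integral>\<^sup>+ x. ennreal ((norm (inner_F c v (\<Phi> x)))\<^sup>2) \<partial>M) \<le> ennreal (B * (norm v)\<^sup>2)))"

definition synthT ::
  "'a measure \<Rightarrow> ('a \<Rightarrow> 'f::{real_normed_field,euclidean_space}) \<Rightarrow> ('a \<Rightarrow> 'f^'n) \<Rightarrow> 'f^'n" where
  "synthT M h \<Phi> = (\<integral> x. h x *s \<Phi> x \<partial>M)"

definition frames_dense_in_fibre ::
  "('f::{real_normed_field,euclidean_space} \<Rightarrow> 'f) \<Rightarrow> 'a measure \<Rightarrow> ('a \<Rightarrow> 'f) \<Rightarrow> 'f^'n \<Rightarrow> bool" where
  "frames_dense_in_fibre c M h d \<longleftrightarrow>
     (\<forall>\<Phi>\<in>L2_space M. synthT M h \<Phi> = d \<longrightarrow>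
        (\<forall>e>0. \<exists>\<Psi>. cont_frame c M \<Psi> \<and> synthT M h \<Psi> = d \<and> L2_dist2 M \<Phi> \<Psi> < ennreal (e\<^sup>2)))"

end

theory Submission
  imports Defs "HOL-Computational_Algebra.Polynomial"
begin

text \<open>A square-integrable family \<Psi> is a frame exactly when its Gram matrix
  G(\<Psi>)_ij = \<integral> \<Psi>_i conj(\<Psi>_j) is invertible: the optimal frame bounds are the extreme
  values on the unit sphere of the continuous quadratic form
  v \<mapsto> \<integral> |<v, \<Psi>_x>|^2 = v^* G(\<Psi>) v, so the lower one is positive as soon as the form
  is positive definite. Given \<Phi> and a frame \<Psi>0 in the fibre T^{-1}{d}, the segment
  \<Phi> + t(\<Psi>0 - \<Phi>) stays in the fibre since T is linear, and det G along it is a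
  polynomial in t, nonzero at t = 1. It therefore has finitely many roots, so there
  are arbitrarily small t > 0 giving frames at L^2 distance t \<parallel>\<Psi>0 - \<Phi>\<parallel> from \<Phi>.\<close>

lemma L2_space_iff_integrable:
  fixes F :: "'a \<Rightarrow> 'b::real_normed_vector"
  shows "F \<in> L2_space M \<longleftrightarrow> F \<in> borel_measurable M \<and> integrable M (\<lambda>x. (norm (F x))\<^sup>2)"
  unfolding L2_space_def by (subst integrable_iff_bounded) auto

lemma L2_space_measurable: "F \<in> L2_space M \<Longrightarrow> F \<in> borel_measurable M"
  by (simp add: L2_space_def)

lemma L2_space_integrable_norm2: "F \<in> L2_space M \<Longrightarrow> integrable M (\<lambda>x. (norm (F x))\<^sup>2)"
  by (simp add: L2_space_iff_integrable)

lemma integrable_bounded_by_L2_product: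
  fixes f :: "'a \<Rightarrow> 'b::real_normed_vector" and g :: "'a \<Rightarrow> 'c::real_normed_vector"
    and k :: "'a \<Rightarrow> 'd::{banach,second_countable_topology}"
  assumes f: "f \<in> L2_space M" and g: "g \<in> L2_space M"
    and k: "k \<in> borel_measurable M" and bound: "\<And>x. norm (k x) \<le> norm (f x) * norm (g x)"
  shows "integrable M k"
proof (rule Bochner_Integration.integrable_bound[OF _ k])
  show "integrable M (\<lambda>x. (norm (f x))\<^sup>2 + (norm (g x))\<^sup>2)"
    using f g by (auto dest: L2_space_integrable_norm2)
  show "AE x in M. norm (k x) \<le> norm ((norm (f x))\<^sup>2 + (norm (g x))\<^sup>2)"
  proof (intro AE_I2)
    fix x
    have "norm (f x) * norm (g x) \<le> (norm (f x))\<^sup>2 + (norm (g x))\<^sup>2"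
      using sum_squares_bound[of "norm (f x)" "norm (g x)"]
        mult_nonneg_nonneg[OF norm_ge_zero norm_ge_zero, of "f x" "g x"] by linarith
    then show "norm (k x) \<le> norm ((norm (f x))\<^sup>2 + (norm (g x))\<^sup>2)"
      using bound[of x] by simp
  qed
qed

lemma L2_space_add:
  fixes F G :: "'a \<Rightarrow> 'b::{banach,second_countable_topology}"
  assumes F: "F \<in> L2_space M" and G: "G \<in> L2_space M"
  shows "(\<lambda>x. F x + G x) \<in> L2_space M"
proof -
  have meas: "(\<lambda>x. F x + G x) \<in> borel_measurable M"
    using L2_space_measurable[OF F] L2_space_measurable[OF G] by measurable
  have "integrable M (\<lambda>x. norm (F x) * norm (G x))"
    using L2_space_measurable[OF F] L2_space_measurable[OF G]
    by (intro integrable_bounded_by_L2_product[OF F G]) auto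
  then have "integrable M (\<lambda>x. (norm (F x))\<^sup>2 + (norm (G x))\<^sup>2 + 2 * norm (F x) * norm (G x))"
    using L2_space_integrable_norm2[OF F] L2_space_integrable_norm2[OF G] by (auto simp: mult.assoc)
  then have "integrable M (\<lambda>x. (norm (F x + G x))\<^sup>2)"
  proof (rule Bochner_Integration.integrable_bound)
    show "(\<lambda>x. (norm (F x + G x))\<^sup>2) \<in> borel_measurable M" using meas by measurable
    show "AE x in M. norm ((norm (F x + G x))\<^sup>2)
        \<le> norm ((norm (F x))\<^sup>2 + (norm (G x))\<^sup>2 + 2 * norm (F x) * norm (G x))"
      using power_mono[OF norm_triangle_ineq, of _ _ 2] by (intro AE_I2) (simp add: power2_sum)
  qed
  with meas show ?thesis by (simp add: L2_space_iff_integrable)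
qed

lemma L2_space_scaleR:
  fixes F :: "'a \<Rightarrow> 'b::{banach,second_countable_topology}"
  assumes F: "F \<in> L2_space M"
  shows "(\<lambda>x. t *\<^sub>R F x) \<in> L2_space M"
  using L2_space_integrable_norm2[OF F] L2_space_measurable[OF F]
  by (simp add: L2_space_iff_integrable power_mult_distrib)

lemma L2_space_diff:
  fixes F G :: "'a \<Rightarrow> 'b::{banach,second_countable_topology}"
  assumes "F \<in> L2_space M" and "G \<in> L2_space M"
  shows "(\<lambda>x. F x - G x) \<in> L2_space M"
  using L2_space_add[OF assms(1) L2_space_scaleR[OF assms(2), of "-1"]] by simp

lemma L2_dist2_segment:
  fixes \<Phi> D :: "'a \<Rightarrow> 'b::real_normed_vector"
  assumes "D \<in> L2_space M"
  shows "L2_dist2 M \<Phi> (\<lambda>x. \<Phi> x + t *\<^sub>R D x) = ennreal (t\<^sup>2 * (\<integral>x. (norm (D x))\<^sup>2 \<partial>M))"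
proof -
  have "L2_dist2 M \<Phi> (\<lambda>x. \<Phi> x + t *\<^sub>R D x) = (\<integral>\<^sup>+ x. ennreal (t\<^sup>2 * (norm (D x))\<^sup>2) \<partial>M)"
    unfolding L2_dist2_def by (simp add: power_mult_distrib)
  also have "\<dots> = ennreal (\<integral>x. t\<^sup>2 * (norm (D x))\<^sup>2 \<partial>M)"
    using L2_space_integrable_norm2[OF assms] by (intro nn_integral_eq_integral) auto
  finally show ?thesis by simp
qed

lemma vec_nth_borel_measurable [measurable (raw)]:
  fixes F :: "'a \<Rightarrow> 'b::real_normed_vector^'n"
  assumes "F \<in> borel_measurable M"
  shows "(\<lambda>x. F x $ i) \<in> borel_measurable M"
  using borel_measurable_continuous_on[OF linear_continuous_on[OF bounded_linear_vec_nth] assms]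
  by simp

lemma vector_scalar_mult_borel_measurable:
  fixes h :: "'a \<Rightarrow> 'f::{real_normed_field,euclidean_space}" and F :: "'a \<Rightarrow> 'f^'n"
  assumes "h \<in> borel_measurable M" and "F \<in> borel_measurable M"
  shows "(\<lambda>x. h x *s F x) \<in> borel_measurable M"
proof (rule borel_measurable_continuous_Pair[OF assms])
  have "continuous_on UNIV (\<lambda>p::'f \<times> ('f^'n). snd p $ i)" for i
    by (intro continuous_on_compose2[OF linear_continuous_on[OF bounded_linear_vec_nth]
          continuous_on_snd]) auto
  then show "continuous_on UNIV (\<lambda>p::'f \<times> ('f^'n). fst p *s snd p)"
    unfolding vector_scalar_mult_def by (intro continuous_intros)
qed

lemma synthT_segment:
  fixes h :: "'a \<Rightarrow> 'f::{real_normed_field,euclidean_space}" and \<Phi> \<Psi> :: "'a \<Rightarrow> 'f^'n"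
  assumes h: "h \<in> L2_space M" and \<Phi>: "\<Phi> \<in> L2_space M" and \<Psi>: "\<Psi> \<in> L2_space M"
  shows "synthT M h (\<lambda>x. \<Phi> x + t *\<^sub>R (\<Psi> x - \<Phi> x))
    = synthT M h \<Phi> + t *\<^sub>R (synthT M h \<Psi> - synthT M h \<Phi>)"
proof -
  have integrable: "integrable M (\<lambda>x. h x *s F x)" if "F \<in> L2_space M" for F :: "'a \<Rightarrow> 'f^'n"
    using L2_space_measurable[OF h] L2_space_measurable[OF that]
    by (intro integrable_bounded_by_L2_product[OF h that] vector_scalar_mult_borel_measurable)
      (auto simp: norm_vec_def norm_mult L2_set_right_distrib)
  have "(\<lambda>x. h x *s (\<Phi> x + t *\<^sub>R (\<Psi> x - \<Phi> x)))
      = (\<lambda>x. h x *s \<Phi> x + t *\<^sub>R (h x *s \<Psi> x - h x *s \<Phi> x))"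
    by (auto simp: vec_eq_iff algebra_simps)
  then show ?thesis
    unfolding synthT_def using integrable[OF \<Phi>] integrable[OF \<Psi>] by simp
qed

lemma poly_det:
  fixes P :: "'f::comm_ring_1 poly^'n^'n"
  shows "poly (det P) z = det (\<chi> i j. poly (P $ i $ j) z)"
  unfolding det_def by (simp add: poly_sum poly_prod poly_of_int)

lemma poly_of_real_nonzero_near_0:
  fixes P :: "'f::real_normed_field poly"
  assumes "P \<noteq> 0" and "0 < \<delta>"
  obtains t where "0 < t" "t < \<delta>" "poly P (of_real t) \<noteq> 0"
proof -
  have "finite (of_real -` {z. poly P z = 0} :: real set)"
    by (rule finite_vimageI[OF poly_roots_finite[OF assms(1)]]) (simp add: inj_on_def)
  then have "infinite ({0<..<\<delta>} - of_real -` {z. poly P z = 0})"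
    using infinite_Ioo[OF assms(2)] by (rule Diff_infinite_finite)
  then obtain t where "t \<in> {0<..<\<delta>} - of_real -` {z. poly P z = 0}"
    by (metis finite.emptyI ex_in_conv)
  with that show ?thesis by auto
qed

lemma homogeneous2_lower_bound:
  fixes Q :: "'v::euclidean_space \<Rightarrow> real"
  assumes cont: "continuous_on UNIV Q"
    and homogeneous: "\<And>a v. Q (a *\<^sub>R v) = a\<^sup>2 * Q v"
    and pos: "\<And>v. v \<noteq> 0 \<Longrightarrow> 0 < Q v"
  shows "\<exists>A>0. \<forall>v. A * (norm v)\<^sup>2 \<le> Q v"
proof -
  obtain u where u: "u \<in> sphere 0 1" and min: "\<And>w. w \<in> sphere 0 1 \<Longrightarrow> Q u \<le> Q w"
    using continuous_attains_inf[OF compact_sphere _ continuous_on_subset[OF cont]]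
    by (metis sphere_eq_empty not_less zero_le_one subset_UNIV)
  have "Q u * (norm v)\<^sup>2 \<le> Q v" for v
  proof (cases "v = 0")
    case True
    then show ?thesis using homogeneous[of 0 v] by simp
  next
    case False
    then have "Q v = (norm v)\<^sup>2 * Q (sgn v)"
      using homogeneous[of "norm v" "sgn v"] by (simp add: sgn_div_norm)
    moreover have "Q u \<le> Q (sgn v)" using False by (intro min) (simp add: norm_sgn)
    ultimately show ?thesis by (metis mult.commute mult_right_mono zero_le_power2)
  qed
  moreover have "0 < Q u" using u by (intro pos) auto
  ultimately show ?thesis by blast
qed

lemma det_nonzero_iff_kernel_trivial:
  fixes G :: "'f::field^'n^'n"
  shows "det G \<noteq> 0 \<longleftrightarrow> (\<forall>v. G *v v = 0 \<longrightarrow> v = 0)"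
  using det_nz_iff_inj_gen[of "(*v) G"] vec.inj_iff_eq_0[of G] by simp

definition gram ::
  "('f::{real_normed_field,euclidean_space} \<Rightarrow> 'f) \<Rightarrow> 'a measure \<Rightarrow> ('a \<Rightarrow> 'f^'n) \<Rightarrow> 'f^'n^'n"
where
  "gram c M \<Psi> = (\<chi> i j. \<integral>x. \<Psi> x $ i * c (\<Psi> x $ j) \<partial>M)"

locale conjugation =
  fixes c :: "'f::{real_normed_field,euclidean_space} \<Rightarrow> 'f"
  assumes add: "c (a + b) = c a + c b"
    and mult: "c (a * b) = c a * c b"
    and involutive: "c (c a) = a"
    and of_real: "c (of_real r) = of_real r"
    and mult_self: "z * c z = of_real ((norm z)\<^sup>2)"
    and norm: "norm (c z) = norm z"
begin

lemma bounded_linear: "bounded_linear c"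
  by (rule bounded_linear_intro[of _ 1])
    (auto simp: add mult of_real norm scaleR_conv_of_real)

lemma borel_measurable [measurable]: "c \<in> borel_measurable borel"
  by (intro borel_measurable_continuous_onI linear_continuous_on bounded_linear)

lemma sum: "c (sum f A) = (\<Sum>i\<in>A. c (f i))"
  using add[of 0 0] by (induction A rule: infinite_finite_induct) (auto simp: add)

lemma integrable_component_product:
  assumes F: "F \<in> L2_space M" and G: "G \<in> L2_space M"
  shows "integrable M (\<lambda>x. F x $ i * c (G x $ j))"
proof (rule integrable_bounded_by_L2_product[OF F G])
  show "(\<lambda>x. F x $ i * c (G x $ j)) \<in> borel_measurable M"
    using L2_space_measurable[OF F] L2_space_measurable[OF G] by measurable
  show "norm (F x $ i * c (G x $ j)) \<le> norm (F x) * norm (G x)" for x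
    using mult_mono[OF Finite_Cartesian_Product.norm_nth_le Finite_Cartesian_Product.norm_nth_le]
    by (simp add: norm_mult norm)
qed

lemma inner_F_borel_measurable [measurable (raw)]:
  "\<Psi> \<in> borel_measurable M \<Longrightarrow> (\<lambda>x. inner_F c v (\<Psi> x)) \<in> borel_measurable M"
  unfolding inner_F_def by measurable

lemma norm_inner_F_le: "norm (inner_F c v w) \<le> norm v * norm w"
proof -
  have "norm (inner_F c v w) \<le> (\<Sum>i\<in>UNIV. \<bar>norm (v $ i)\<bar> * \<bar>norm (w $ i)\<bar>)"
    unfolding inner_F_def using norm_sum[of "\<lambda>i. v $ i * c (w $ i)" UNIV]
    by (simp add: norm_mult norm)
  also have "\<dots> \<le> norm v * norm w"
    unfolding norm_vec_def by (rule L2_set_mult_ineq)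
  finally show ?thesis .
qed

lemma norm2_inner_F_le: "(norm (inner_F c v w))\<^sup>2 \<le> (norm v)\<^sup>2 * (norm w)\<^sup>2"
  using power_mono[OF norm_inner_F_le norm_ge_zero] by (simp add: power_mult_distrib)

lemma inner_F_scaleR_left: "inner_F c (a *\<^sub>R v) w = of_real a * inner_F c v w"
  unfolding inner_F_def vector_scaleR_component
  by (simp add: sum_distrib_left scaleR_conv_of_real mult.assoc)

lemma integrable_norm2_inner_F:
  assumes \<Psi>: "\<Psi> \<in> L2_space M"
  shows "integrable M (\<lambda>x. (norm (inner_F c v (\<Psi> x)))\<^sup>2)"
proof (rule Bochner_Integration.integrable_bound)
  show "integrable M (\<lambda>x. (norm v)\<^sup>2 * (norm (\<Psi> x))\<^sup>2)"
    using L2_space_integrable_norm2[OF \<Psi>] by auto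
  show "(\<lambda>x. (norm (inner_F c v (\<Psi> x)))\<^sup>2) \<in> borel_measurable M"
    using L2_space_measurable[OF \<Psi>] by measurable
  show "AE x in M. norm ((norm (inner_F c v (\<Psi> x)))\<^sup>2) \<le> norm ((norm v)\<^sup>2 * (norm (\<Psi> x))\<^sup>2)"
    using norm2_inner_F_le by (intro AE_I2) simp
qed

lemma nn_integral_norm2_inner_F:
  assumes "\<Psi> \<in> L2_space M"
  shows "(\<integral>\<^sup>+ x. ennreal ((norm (inner_F c v (\<Psi> x)))\<^sup>2) \<partial>M)
    = ennreal (\<integral>x. (norm (inner_F c v (\<Psi> x)))\<^sup>2 \<partial>M)"
  by (rule nn_integral_eq_integral[OF integrable_norm2_inner_F[OF assms]]) auto

lemma gram_mult_vec:
  assumes \<Psi>: "\<Psi> \<in> L2_space M"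
  shows "(gram c M \<Psi> *v v) $ i = (\<integral>x. \<Psi> x $ i * inner_F c v (\<Psi> x) \<partial>M)"
proof -
  have "(gram c M \<Psi> *v v) $ i = (\<Sum>j\<in>UNIV. (\<integral>x. \<Psi> x $ i * c (\<Psi> x $ j) * v $ j \<partial>M))"
    by (simp add: gram_def matrix_vector_mult_def)
  also have "\<dots> = (\<integral>x. (\<Sum>j\<in>UNIV. \<Psi> x $ i * c (\<Psi> x $ j) * v $ j) \<partial>M)"
    by (simp add: integrable_component_product[OF \<Psi> \<Psi>])
  also have "\<dots> = (\<integral>x. \<Psi> x $ i * inner_F c v (\<Psi> x) \<partial>M)"
    by (simp add: inner_F_def sum_distrib_left mult_ac)
  finally show ?thesis .
qed

lemma gram_quadratic_form:
  assumes \<Psi>: "\<Psi> \<in> L2_space M"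
  shows "(\<Sum>i\<in>UNIV. c (v $ i) * (gram c M \<Psi> *v v) $ i)
    = of_real (\<integral>x. (norm (inner_F c v (\<Psi> x)))\<^sup>2 \<partial>M)"
proof -
  have integrable: "integrable M (\<lambda>x. \<Psi> x $ i * inner_F c v (\<Psi> x))" for i
    unfolding inner_F_def sum_distrib_left mult.left_commute[of "\<Psi> _ $ i"]
    by (auto intro!: integrable_sum integrable_mult_right integrable_component_product[OF \<Psi> \<Psi>])
  have conj_inner: "c (inner_F c v w) = (\<Sum>i\<in>UNIV. c (v $ i) * w $ i)" for w
    by (simp add: inner_F_def sum mult involutive mult.commute)
  have "(\<Sum>i\<in>UNIV. c (v $ i) * (gram c M \<Psi> *v v) $ i)
      = (\<integral>x. (\<Sum>i\<in>UNIV. c (v $ i) * (\<Psi> x $ i * inner_F c v (\<Psi> x))) \<partial>M)"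
    using integrable by (simp add: gram_mult_vec[OF \<Psi>])
  also have "\<dots> = (\<integral>x. inner_F c v (\<Psi> x) * c (inner_F c v (\<Psi> x)) \<partial>M)"
    by (simp add: conj_inner sum_distrib_left mult_ac)
  also have "\<dots> = of_real (\<integral>x. (norm (inner_F c v (\<Psi> x)))\<^sup>2 \<partial>M)"
    unfolding mult_self by (rule integral_of_real[OF integrable_norm2_inner_F[OF \<Psi>]])
  finally show ?thesis .
qed

lemma cont_frame_imp_det_gram_nonzero:
  fixes \<Psi> :: "'a \<Rightarrow> 'f^'n"
  assumes frame: "cont_frame c M \<Psi>"
  shows "det (gram c M \<Psi>) \<noteq> 0"
  unfolding det_nonzero_iff_kernel_trivial
proof (intro allI impI)
  fix v :: "'f^'n"
  assume kernel: "gram c M \<Psi> *v v = 0"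
  have \<Psi>: "\<Psi> \<in> L2_space M" using frame by (simp add: cont_frame_def)
  obtain A where A: "0 < A"
    and lower: "ennreal (A * (norm v)\<^sup>2) \<le> (\<integral>\<^sup>+ x. ennreal ((norm (inner_F c v (\<Psi> x)))\<^sup>2) \<partial>M)"
    using frame unfolding cont_frame_def by blast
  have "(\<integral>x. (norm (inner_F c v (\<Psi> x)))\<^sup>2 \<partial>M) = 0"
    using gram_quadratic_form[OF \<Psi>, of v] kernel by simp
  then have "A * (norm v)\<^sup>2 \<le> 0"
    using lower by (simp add: nn_integral_norm2_inner_F[OF \<Psi>] ennreal_eq_0_iff)
  with A show "v = 0" by (simp add: mult_le_0_iff)
qed

lemma integral_norm2_inner_F_pos:
  assumes \<Psi>: "\<Psi> \<in> L2_space M" and det: "det (gram c M \<Psi>) \<noteq> 0" and "v \<noteq> 0"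
  shows "0 < (\<integral>x. (norm (inner_F c v (\<Psi> x)))\<^sup>2 \<partial>M)"
proof (rule ccontr)
  assume "\<not> ?thesis"
  then have "(\<integral>x. (norm (inner_F c v (\<Psi> x)))\<^sup>2 \<partial>M) = 0"
    by (simp add: integral_nonneg_AE order.antisym)
  then have "AE x in M. inner_F c v (\<Psi> x) = 0"
    by (subst (asm) integral_nonneg_eq_0_iff_AE[OF integrable_norm2_inner_F[OF \<Psi>]]) auto
  then have "AE x in M. \<Psi> x $ i * inner_F c v (\<Psi> x) = 0" for i
    by eventually_elim simp
  then have "gram c M \<Psi> *v v = 0"
    by (simp add: vec_eq_iff gram_mult_vec[OF \<Psi>] integral_eq_zero_AE)
  with det \<open>v \<noteq> 0\<close> show False by (simp add: det_nonzero_iff_kernel_trivial)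
qed

lemma continuous_on_integral_norm2_inner_F:
  assumes \<Psi>: "\<Psi> \<in> L2_space M"
  shows "continuous_on UNIV (\<lambda>v. \<integral>x. (norm (inner_F c v (\<Psi> x)))\<^sup>2 \<partial>M)"
proof -
  have "(\<integral>x. (norm (inner_F c v (\<Psi> x)))\<^sup>2 \<partial>M)
      = norm (\<Sum>i\<in>UNIV. c (v $ i) * (\<Sum>j\<in>UNIV. gram c M \<Psi> $ i $ j * v $ j))" for v
  proof -
    have "0 \<le> (\<integral>x. (norm (inner_F c v (\<Psi> x)))\<^sup>2 \<partial>M)"
      by (rule integral_nonneg_AE) auto
    then show ?thesis
      using arg_cong[OF gram_quadratic_form[OF \<Psi>, of v], of norm]
      by (simp add: matrix_vector_mult_def)
  qed
  moreover have nth: "continuous_on UNIV (\<lambda>v::'f^'n. v $ i)" for i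
    by (intro linear_continuous_on bounded_linear_vec_nth)
  moreover have "continuous_on UNIV (\<lambda>v::'f^'n. c (v $ i))" for i
    by (rule continuous_on_compose2[OF linear_continuous_on[OF bounded_linear] nth]) auto
  ultimately show ?thesis
    by (simp only:) (intro continuous_intros)
qed

lemma integral_norm2_inner_F_le:
  assumes \<Psi>: "\<Psi> \<in> L2_space M"
  shows "(\<integral>x. (norm (inner_F c v (\<Psi> x)))\<^sup>2 \<partial>M) \<le> (\<integral>x. (norm (\<Psi> x))\<^sup>2 \<partial>M) * (norm v)\<^sup>2"
proof -
  have "(\<integral>x. (norm (inner_F c v (\<Psi> x)))\<^sup>2 \<partial>M) \<le> (\<integral>x. (norm v)\<^sup>2 * (norm (\<Psi> x))\<^sup>2 \<partial>M)"
    using L2_space_integrable_norm2[OF \<Psi>] norm2_inner_F_le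
    by (intro integral_mono integrable_norm2_inner_F[OF \<Psi>]) auto
  then show ?thesis by (simp add: mult.commute)
qed

lemma det_gram_nonzero_imp_cont_frame:
  fixes \<Psi> :: "'a \<Rightarrow> 'f^'n"
  assumes \<Psi>: "\<Psi> \<in> L2_space M" and det: "det (gram c M \<Psi>) \<noteq> 0"
  shows "cont_frame c M \<Psi>"
proof -
  define Q where "Q v = (\<integral>x. (norm (inner_F c v (\<Psi> x)))\<^sup>2 \<partial>M)" for v :: "'f^'n"
  have "continuous_on UNIV Q"
    unfolding Q_def by (rule continuous_on_integral_norm2_inner_F[OF \<Psi>])
  moreover have "Q (a *\<^sub>R v) = a\<^sup>2 * Q v" for a v
    by (simp add: Q_def inner_F_scaleR_left norm_mult power_mult_distrib)
  moreover have "0 < Q v" if "v \<noteq> 0" for v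
    unfolding Q_def by (rule integral_norm2_inner_F_pos[OF \<Psi> det that])
  ultimately obtain A where A: "0 < A" and lower: "\<And>v. A * (norm v)\<^sup>2 \<le> Q v"
    using homogeneous2_lower_bound by blast
  define B where "B = max A (\<integral>x. (norm (\<Psi> x))\<^sup>2 \<partial>M)"
  have upper: "Q v \<le> B * (norm v)\<^sup>2" for v
    using integral_norm2_inner_F_le[OF \<Psi>, of v] unfolding Q_def B_def
    by (meson max.cobounded2 mult_right_mono order_trans zero_le_power2)
  show ?thesis
    unfolding cont_frame_def nn_integral_norm2_inner_F[OF \<Psi>]
    using \<Psi> A lower upper
    by (intro conjI exI[of _ A] exI[of _ B]) (auto simp: B_def Q_def ennreal_leI)
qed

lemma cont_frame_iff_det_gram_nonzero:
  "\<Psi> \<in> L2_space M \<Longrightarrow> cont_frame c M \<Psi> \<longleftrightarrow> det (gram c M \<Psi>) \<noteq> 0"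
  using cont_frame_imp_det_gram_nonzero det_gram_nonzero_imp_cont_frame by blast

lemma det_gram_segment_poly:
  fixes \<Phi> D :: "'a \<Rightarrow> 'f^'n"
  assumes \<Phi>: "\<Phi> \<in> L2_space M" and D: "D \<in> L2_space M"
  obtains P where "\<And>t. det (gram c M (\<lambda>x. \<Phi> x + t *\<^sub>R D x)) = poly P (of_real t)"
proof
  define entry where "entry i j = [:\<integral>x. \<Phi> x $ i * c (\<Phi> x $ j) \<partial>M,
      \<integral>x. D x $ i * c (\<Phi> x $ j) + \<Phi> x $ i * c (D x $ j) \<partial>M,
      \<integral>x. D x $ i * c (D x $ j) \<partial>M:]" for i j
  fix t :: real
  have "gram c M (\<lambda>x. \<Phi> x + t *\<^sub>R D x) $ i $ j = poly (entry i j) (of_real t)" for i j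
  proof -
    have component: "(\<Phi> x + t *\<^sub>R D x) $ k = \<Phi> x $ k + of_real t * D x $ k" for x k
      unfolding vector_add_component vector_scaleR_component by (simp add: scaleR_conv_of_real)
    have "(\<Phi> x + t *\<^sub>R D x) $ i * c ((\<Phi> x + t *\<^sub>R D x) $ j)
        = \<Phi> x $ i * c (\<Phi> x $ j) + of_real t * (D x $ i * c (\<Phi> x $ j) + \<Phi> x $ i * c (D x $ j))
          + (of_real t)\<^sup>2 * (D x $ i * c (D x $ j))" for x
      unfolding component by (simp add: add mult of_real algebra_simps power2_eq_square)
    then show ?thesis
      using integrable_component_product[OF \<Phi> \<Phi>] integrable_component_product[OF D \<Phi>]
        integrable_component_product[OF \<Phi> D] integrable_component_product[OF D D]
      by (simp add: gram_def entry_def algebra_simps power2_eq_square)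
  qed
  then have "gram c M (\<lambda>x. \<Phi> x + t *\<^sub>R D x) = (\<chi> i j. poly (entry i j) (of_real t))"
    by (simp add: vec_eq_iff)
  then show "det (gram c M (\<lambda>x. \<Phi> x + t *\<^sub>R D x)) = poly (det (\<chi> i j. entry i j)) (of_real t)"
    by (simp add: poly_det)
qed

lemma frames_dense_in_fibre_if_frame:
  fixes h :: "'a \<Rightarrow> 'f" and \<Psi>0 :: "'a \<Rightarrow> 'f^'n"
  assumes h: "h \<in> L2_space M" and frame: "cont_frame c M \<Psi>0"
  shows "frames_dense_in_fibre c M h (synthT M h \<Psi>0)"
  unfolding frames_dense_in_fibre_def
proof (intro ballI impI allI)
  fix \<Phi> :: "'a \<Rightarrow> 'f^'n" and e :: real
  assume \<Phi>: "\<Phi> \<in> L2_space M" and fibre: "synthT M h \<Phi> = synthT M h \<Psi>0" and e: "0 < e"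
  have \<Psi>0: "\<Psi>0 \<in> L2_space M" using frame by (simp add: cont_frame_def)
  define D where "D = (\<lambda>x. \<Psi>0 x - \<Phi> x)"
  define \<Psi> where "\<Psi> t = (\<lambda>x. \<Phi> x + t *\<^sub>R D x)" for t :: real
  have D: "D \<in> L2_space M" unfolding D_def by (rule L2_space_diff[OF \<Psi>0 \<Phi>])
  have \<Psi>_L2: "\<Psi> t \<in> L2_space M" for t
    unfolding \<Psi>_def by (rule L2_space_add[OF \<Phi> L2_space_scaleR[OF D]])
  obtain P where P: "\<And>t. det (gram c M (\<Psi> t)) = poly P (of_real t)"
    using det_gram_segment_poly[OF \<Phi> D] unfolding \<Psi>_def by blast
  have "\<Psi> 1 = \<Psi>0" by (simp add: \<Psi>_def D_def fun_eq_iff)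
  then have "P \<noteq> 0"
    using P[of 1] cont_frame_imp_det_gram_nonzero[OF frame] by auto
  define K where "K = (\<integral>x. (norm (D x))\<^sup>2 \<partial>M)"
  have K: "0 \<le> K" unfolding K_def by (rule integral_nonneg_AE) auto
  obtain t where t: "0 < t" "t < min 1 (e\<^sup>2 / (K + 1))" and nonroot: "poly P (of_real t) \<noteq> 0"
    using poly_of_real_nonzero_near_0[OF \<open>P \<noteq> 0\<close>, of "min 1 (e\<^sup>2 / (K + 1))"] e K by auto
  show "\<exists>\<Psi>. cont_frame c M \<Psi> \<and> synthT M h \<Psi> = synthT M h \<Psi>0 \<and> L2_dist2 M \<Phi> \<Psi> < ennreal (e\<^sup>2)"
  proof (intro exI conjI)
    show "cont_frame c M (\<Psi> t)"
      using cont_frame_iff_det_gram_nonzero[OF \<Psi>_L2] P nonroot by simp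
    show "synthT M h (\<Psi> t) = synthT M h \<Psi>0"
      using synthT_segment[OF h \<Phi> \<Psi>0, of t] fibre by (simp add: \<Psi>_def D_def)
    have "t\<^sup>2 \<le> t"
      using t by (simp add: power2_eq_square mult_left_le_one_le)
    then have "t\<^sup>2 * K \<le> t * K" using K by (rule mult_right_mono)
    moreover have "t * (K + 1) < e\<^sup>2"
      using t K by (simp add: pos_less_divide_eq)
    ultimately have "t\<^sup>2 * K < e\<^sup>2" using t by (simp add: distrib_left)
    then show "L2_dist2 M \<Phi> (\<Psi> t) < ennreal (e\<^sup>2)"
      using e by (simp add: \<Psi>_def L2_dist2_segment[OF D] K_def[symmetric] ennreal_lessI)
  qed
qed

end

interpretation real_conjugation: conjugation "\<lambda>x::real. x"
  by unfold_locales (auto simp: power2_eq_square)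

interpretation complex_conjugation: conjugation cnj
  by unfold_locales (auto simp: complex_norm_square[symmetric] simp del: of_real_power)

theorem corollary6p2:
  fixes M :: "'a measure"
  shows "(\<forall>(h::'a \<Rightarrow> real) (d::real^'n).
            h \<in> L2_space M \<and> (\<exists>\<Phi>. cont_frame (\<lambda>x. x) M \<Phi> \<and> synthT M h \<Phi> = d)
            \<longrightarrow> frames_dense_in_fibre (\<lambda>x. x) M h d)
       \<and> (\<forall>(h::'a \<Rightarrow> complex) (d::complex^'n).
            h \<in> L2_space M \<and> (\<exists>\<Phi>. cont_frame cnj M \<Phi> \<and> synthT M h \<Phi> = d)
            \<longrightarrow> frames_dense_in_fibre cnj M h d)"
  using real_conjugation.frames_dense_in_fibre_if_frame
    complex_conjugation.frames_dense_in_fibre_if_frame by blast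

end
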